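(* Let $\mathbf f$ be the Fibonacci word and $\mathbf g=0\mathbf f$. Then for every nonempty prefix $u$ of $\mathbf f$, the set $\mathbf f|_u$ is an IP$^*$-set (hence a central$^*$ set), and the sets $\mathbf g|_{0u}$ and $\mathbf g|_{1u}$ are both IP-sets (equivalently, central sets).
   Context: The Fibonacci word $\mathbf f=0100101001001\cdots\in\{0,1\}^{\mathbb N}$ is the fixed point of the substitution $0\mapsto01$, $1\mapsto0$. $\mathbb N=\{0,1,2,\dots\}$; for an infinite word $\omega=\omega_0\omega_1\cdots$ and a nonempty finite word $u$, $\omega|_u=\{n:\omega_n\cdots\omega_{n+|u|-1}=u\}$. A set $A\subseteq\mathbb N$ is an IP-set if there is a sequence $x_0<x_1<\cdots$ in $\mathbb N$ with $\sum_{n\in F}x_n\in A$ for all nonempty finite $F\subseteq\mathbb N$, and an IP$^*$-set if it meets every IP-set. $\beta\mathbb N$ is the set of ultrafilters on $\mathbb N$ with addition $A\in p+q$ iff $\{n:A-n\in p\}\in q$ ($A-n=\{m:m+n\in A\}$); a minimal idempotent is a non-principal $p$ with $p+p=p$ in the smallest two-sided ideal of $\beta\mathbb N$; a set is central if it belongs to some minimal idempotent and central$^*$ if it belongs to every minimal idempotent. *)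

theory Defs
  imports Main
begin

text \<open>Infinite words over {0,1} are functions nat => nat (values 0 and 1).\<close>

fun fib_subst :: "nat list \<Rightarrow> nat list" where
  "fib_subst [] = []"
| "fib_subst (a # w) = (if a = 0 then [0, 1] else [0]) @ fib_subst w"

text \<open>The Fibonacci word: its fixed point starting with 0. The n-th iterate
  of the substitution on [0] is a prefix of the fixed point of length at least n+1.\<close>
definition fib_word :: "nat \<Rightarrow> nat" where
  "fib_word n = ((fib_subst ^^ n) [0]) ! n"

definition fib_word_g :: "nat \<Rightarrow> nat" where
  "fib_word_g n = (if n = 0 then 0 else fib_word (n - 1))"

definition occ :: "(nat \<Rightarrow> nat) \<Rightarrow> nat list \<Rightarrow> nat set" where
  "occ \<omega> u = {n. \<forall>i < length u. \<omega> (n + i) = u ! i}"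

definition IP_set :: "nat set \<Rightarrow> bool" where
  "IP_set A \<longleftrightarrow> (\<exists>x :: nat \<Rightarrow> nat. strict_mono x \<and>
      (\<forall>F. finite F \<and> F \<noteq> {} \<longrightarrow> (\<Sum>n\<in>F. x n) \<in> A))"

definition IP_star_set :: "nat set \<Rightarrow> bool" where
  "IP_star_set A \<longleftrightarrow> (\<forall>B. IP_set B \<longrightarrow> A \<inter> B \<noteq> {})"

definition is_ultrafilter :: "nat set set \<Rightarrow> bool" where
  "is_ultrafilter p \<longleftrightarrow> UNIV \<in> p \<and> {} \<notin> p
     \<and> (\<forall>A B. A \<in> p \<and> A \<subseteq> B \<longrightarrow> B \<in> p)
     \<and> (\<forall>A B. A \<in> p \<and> B \<in> p \<longrightarrow> A \<inter> B \<in> p)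
     \<and> (\<forall>A. A \<in> p \<or> - A \<in> p)"

definition betaN :: "nat set set set" where
  "betaN = {p. is_ultrafilter p}"

definition uf_plus :: "nat set set \<Rightarrow> nat set set \<Rightarrow> nat set set" where
  "uf_plus p q = {A. {n. {m. m + n \<in> A} \<in> p} \<in> q}"

definition two_sided_ideal :: "nat set set set \<Rightarrow> bool" where
  "two_sided_ideal I \<longleftrightarrow> I \<noteq> {} \<and> I \<subseteq> betaN \<and>
     (\<forall>p\<in>I. \<forall>q\<in>betaN. uf_plus p q \<in> I \<and> uf_plus q p \<in> I)"

definition smallest_ideal :: "nat set set set" where
  "smallest_ideal = \<Inter> {I. two_sided_ideal I}"

definition minimal_idempotent :: "nat set set \<Rightarrow> bool" where
  "minimal_idempotent p \<longleftrightarrow> p \<in> betaN \<and> (\<forall>n. {n} \<notin> p)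
     \<and> uf_plus p p = p \<and> p \<in> smallest_ideal"

definition central :: "nat set \<Rightarrow> bool" where
  "central A \<longleftrightarrow> (\<exists>p. minimal_idempotent p \<and> A \<in> p)"

definition central_star :: "nat set \<Rightarrow> bool" where
  "central_star A \<longleftrightarrow> (\<forall>p. minimal_idempotent p \<longrightarrow> A \<in> p)"

end

theory Submission
  imports Defs "HOL-Analysis.Kronecker_Approximation_Theorem"
begin

text \<open>The Fibonacci word is the mechanical word of the irrational slope \<beta> = (3 - sqrt 5) / 2:
  f n = 1 iff frac ((n + 1) \<beta>) \<ge> 1 - \<beta>. Hence the occurrences of a prefix of length k
  contain a Bohr neighbourhood {n. \<parallel>n \<beta>\<parallel> < \<delta>} of 0, and such a neighbourhood is IP*: among the
  first N + 1 partial sums of an IP sequence two have fractional parts within 1/N, and their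
  difference is a finite sum in the neighbourhood. By the Galvin-Glazer argument every member of
  a nonprincipal idempotent ultrafilter is an IP set, so IP* sets are central*.

  In g = 0 f an occurrence of 0 u (resp. 1 u) at n is forced by frac (n \<beta>) \<in> (0, \<delta>)
  (resp. \<in> (1 - \<delta>, 1)). For irrational \<gamma>, the ultrafilters containing every set
  {n. 0 < frac (n \<gamma>) < \<delta>} form a closed subsemigroup of betaN meeting a minimal right ideal,
  so the Ellis-Numakura lemma yields a minimal idempotent in it; these occurrence sets are
  therefore central, and in particular IP sets.\<close>

section \<open>Mechanical words and Bohr neighbourhoods\<close>

text \<open>For 0 < \<alpha> < 1 this is the lower mechanical word of slope and intercept \<alpha>,
  \<lfloor>(n + 2) \<alpha>\<rfloor> - \<lfloor>(n + 1) \<alpha>\<rfloor>.\<close>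
definition mech_word :: "real \<Rightarrow> nat \<Rightarrow> nat" where
  "mech_word \<alpha> n = (if 1 - \<alpha> \<le> frac (real (Suc n) * \<alpha>) then 1 else 0)"

text \<open>The Bohr neighbourhood {n. \<parallel>n \<gamma>\<parallel> < \<delta>} of 0, \<parallel>x\<parallel> being the distance from x to \<int>.\<close>
definition bohr_nbhd :: "real \<Rightarrow> real \<Rightarrow> nat set" where
  "bohr_nbhd \<gamma> \<delta> = {n. frac (real n * \<gamma>) < \<delta> \<or> 1 - \<delta> < frac (real n * \<gamma>)}"

definition right_nbhd :: "real \<Rightarrow> real \<Rightarrow> nat set" where
  "right_nbhd \<gamma> \<delta> = {n. 0 < frac (real n * \<gamma>) \<and> frac (real n * \<gamma>) < \<delta>}"

lemma of_nat_mult_irrational_notin_Ints: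
  assumes "\<alpha> \<notin> \<rat>" "n > 0"
  shows "real n * \<alpha> \<notin> \<int>"
proof
  assume "real n * \<alpha> \<in> \<int>"
  then have "real n * \<alpha> / real n \<in> \<rat>"
    by (intro Rats_divide) (auto elim: Ints_cases)
  with assms show False by simp
qed

lemma irrational_uminus: "\<gamma> \<notin> \<rat> \<Longrightarrow> - \<gamma> \<notin> \<rat>"
  by (metis Rats_minus_iff)

lemma frac_mult_irrational_pos:
  "\<alpha> \<notin> \<rat> \<Longrightarrow> n > 0 \<Longrightarrow> 0 < frac (real n * \<alpha>)"
  using of_nat_mult_irrational_notin_Ints by simp

lemma frac_Suc_mult_irrational_neq:
  assumes "\<alpha> \<notin> \<rat>"
  shows "frac (real (Suc k) * \<alpha>) \<noteq> 1 - \<alpha>"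
proof
  assume "frac (real (Suc k) * \<alpha>) = 1 - \<alpha>"
  moreover have "real (Suc (Suc k)) * \<alpha> = of_int \<lfloor>real (Suc k) * \<alpha>\<rfloor> + frac (real (Suc k) * \<alpha>) + \<alpha>"
    unfolding frac_def by (simp add: algebra_simps)
  ultimately have "real (Suc (Suc k)) * \<alpha> \<in> \<int>" by simp
  then show False using of_nat_mult_irrational_notin_Ints[OF assms, of "Suc (Suc k)"] by blast
qed

lemma mech_word_prefix_bohr_nbhd:
  assumes "\<alpha> \<notin> \<rat>"
  shows "\<exists>\<delta>>0. \<forall>n\<in>bohr_nbhd \<alpha> \<delta>. \<forall>i<k. mech_word \<alpha> (n + i) = mech_word \<alpha> i"
proof (induction k)
  case 0
  show ?case by (intro exI[of _ 1]) auto
next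
  case (Suc k)
  then obtain \<delta> where \<delta>: "\<delta> > 0" "\<forall>n\<in>bohr_nbhd \<alpha> \<delta>. \<forall>i<k. mech_word \<alpha> (n + i) = mech_word \<alpha> i"
    by blast
  define y where "y = frac (real (Suc k) * \<alpha>)"
  have "y \<noteq> 1 - \<alpha>" unfolding y_def by (rule frac_Suc_mult_irrational_neq[OF assms])
  moreover have "0 < y" "y < 1"
    unfolding y_def using frac_mult_irrational_pos[OF assms, of "Suc k"] frac_lt_1 by auto
  ultimately have y: "0 < y" "y < 1" "y \<noteq> 1 - \<alpha>" by auto
  \<comment> \<open>Shifting by n moves frac((k+1)\<alpha>) by less than its distance to the threshold 1 - \<alpha>.\<close>
  define \<delta>' where "\<delta>' = min \<delta> (min (1 - y) (min y \<bar>y - (1 - \<alpha>)\<bar>))"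
  have "\<delta>' > 0" unfolding \<delta>'_def using y \<delta> by auto
  moreover have "mech_word \<alpha> (n + i) = mech_word \<alpha> i" if n: "n \<in> bohr_nbhd \<alpha> \<delta>'" and i: "i < Suc k" for n i
  proof (cases "i < k")
    case True
    moreover have "bohr_nbhd \<alpha> \<delta>' \<subseteq> bohr_nbhd \<alpha> \<delta>" unfolding bohr_nbhd_def \<delta>'_def by auto
    ultimately show ?thesis using \<delta> n by blast
  next
    case False
    then have "i = k" using i by simp
    define e where "e = frac (real n * \<alpha>)"
    have e: "0 \<le> e" "e < 1" "e < \<delta>' \<or> 1 - \<delta>' < e"
      using n unfolding e_def bohr_nbhd_def by (auto simp: frac_lt_1)
    have "frac (real (Suc (n + k)) * \<alpha>) = frac (real n * \<alpha> + real (Suc k) * \<alpha>)"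
      by (simp add: algebra_simps)
    also have "\<dots> = (if e + y < 1 then e + y else e + y - 1)"
      unfolding e_def y_def by (rule frac_add)
    finally have "frac (real (Suc (n + k)) * \<alpha>) = (if e + y < 1 then e + y else e + y - 1)" .
    moreover have "\<delta>' \<le> 1 - y" "\<delta>' \<le> y" "\<delta>' \<le> \<bar>y - (1 - \<alpha>)\<bar>" unfolding \<delta>'_def by auto
    ultimately have "(1 - \<alpha> \<le> frac (real (Suc (n + k)) * \<alpha>)) = (1 - \<alpha> \<le> y)"
      using e y by (auto split: if_splits)
    then show ?thesis unfolding mech_word_def \<open>i = k\<close> y_def by simp
  qed
  ultimately show ?case by blast
qed

lemma right_nbhd_subset_bohr_nbhd: "right_nbhd \<gamma> \<delta> \<subseteq> bohr_nbhd \<gamma> \<delta>"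
  unfolding right_nbhd_def bohr_nbhd_def by auto

lemma right_nbhd_uminus:
  "right_nbhd (- \<gamma>) \<delta> = {n. 0 < frac (real n * \<gamma>) \<and> 1 - \<delta> < frac (real n * \<gamma>)}"
  unfolding right_nbhd_def by (auto simp: frac_neg frac_lt_1)

lemma right_nbhd_uminus_subset_bohr_nbhd: "right_nbhd (- \<gamma>) \<delta> \<subseteq> bohr_nbhd \<gamma> \<delta>"
  unfolding right_nbhd_uminus bohr_nbhd_def by auto

lemma occ_Cons_iff: "n \<in> occ \<omega> (a # u) \<longleftrightarrow> \<omega> n = a \<and> Suc n \<in> occ \<omega> u"
  unfolding occ_def by (auto simp: less_Suc_eq_0_disj)

lemma occ_map_upt_iff: "n \<in> occ \<omega> (map \<omega> [0..<k]) \<longleftrightarrow> (\<forall>i<k. \<omega> (n + i) = \<omega> i)"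
  unfolding occ_def by simp

lemma shifted_mech_word_occ_right_nbhd:
  fixes \<alpha> :: real and k :: nat
  defines "g \<equiv> \<lambda>n. if n = 0 then 0 else mech_word \<alpha> (n - 1)"
    and "u \<equiv> map (mech_word \<alpha>) [0..<k]"
  assumes "\<alpha> \<notin> \<rat>" "0 < \<alpha>" "\<alpha> < 1"
  obtains \<delta> where "\<delta> > 0" "right_nbhd \<alpha> \<delta> \<subseteq> occ g (0 # u)" "right_nbhd (- \<alpha>) \<delta> \<subseteq> occ g (1 # u)"
proof -
  obtain \<delta> where \<delta>: "\<delta> > 0" "\<forall>n\<in>bohr_nbhd \<alpha> \<delta>. \<forall>i<k. mech_word \<alpha> (n + i) = mech_word \<alpha> i"
    using mech_word_prefix_bohr_nbhd[OF assms(3)] by blast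
  define \<delta>' where "\<delta>' = min \<delta> (min \<alpha> (1 - \<alpha>))"
  have occ_g: "n \<in> occ g (mech_word \<alpha> (n - 1) # u)" if "n \<in> bohr_nbhd \<alpha> \<delta>'" "n > 0" for n
  proof -
    have "bohr_nbhd \<alpha> \<delta>' \<subseteq> bohr_nbhd \<alpha> \<delta>" unfolding bohr_nbhd_def \<delta>'_def by auto
    then have "Suc n \<in> occ g u"
      using \<delta>(2) that unfolding u_def occ_def g_def by auto
    then show ?thesis unfolding occ_Cons_iff g_def using \<open>n > 0\<close> by simp
  qed
  have "right_nbhd \<alpha> \<delta>' \<subseteq> occ g (0 # u)"
  proof
    fix n assume n: "n \<in> right_nbhd \<alpha> \<delta>'"
    then have "n > 0" unfolding right_nbhd_def by (cases n) auto
    moreover from n this have "mech_word \<alpha> (n - 1) = 0"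
      unfolding right_nbhd_def mech_word_def \<delta>'_def by simp
    ultimately show "n \<in> occ g (0 # u)"
      using occ_g[of n] n right_nbhd_subset_bohr_nbhd[of \<alpha> \<delta>'] by auto
  qed
  moreover have "right_nbhd (- \<alpha>) \<delta>' \<subseteq> occ g (1 # u)"
  proof
    fix n assume n: "n \<in> right_nbhd (- \<alpha>) \<delta>'"
    then have "n > 0" unfolding right_nbhd_uminus by (cases n) auto
    moreover from n this have "mech_word \<alpha> (n - 1) = 1"
      unfolding right_nbhd_uminus mech_word_def \<delta>'_def by auto
    ultimately show "n \<in> occ g (1 # u)"
      using occ_g[of n] n right_nbhd_uminus_subset_bohr_nbhd[of \<alpha> \<delta>'] by auto
  qed
  moreover have "\<delta>' > 0" unfolding \<delta>'_def using \<delta>(1) assms by auto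
  ultimately show thesis using that by blast
qed

section \<open>The Fibonacci word is mechanical\<close>

definition fib_slope :: real where
  "fib_slope = (3 - sqrt 5) / 2"

lemma fib_slope_sq: "fib_slope * fib_slope = 3 * fib_slope - 1"
  unfolding fib_slope_def by (simp add: field_simps)

lemma fib_slope_bounds: "0 < fib_slope" "fib_slope < 1 / 2"
proof -
  have "2 < sqrt 5" "sqrt 5 < 3"
    by (simp_all add: real_less_rsqrt real_less_lsqrt)
  then show "0 < fib_slope" "fib_slope < 1 / 2" unfolding fib_slope_def by auto
qed

lemma fib_slope_irrational: "fib_slope \<notin> \<rat>"
proof
  assume "fib_slope \<in> \<rat>"
  then obtain m n :: nat where n: "n \<noteq> 0" and mn: "\<bar>fib_slope\<bar> = real m / real n"
    and cop: "coprime m n"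
    by (rule Rats_abs_nat_div_natE)
  have m: "fib_slope = real m / real n" using mn fib_slope_bounds by simp
  \<comment> \<open>m/n is a root of x^2 - 3x + 1, so n divides m^2 and hence n = 1.\<close>
  have "real (m * m + n * n) = real (3 * m * n)"
    using fib_slope_sq n unfolding m by (simp add: field_simps)
  then have "m * m + n * n = 3 * m * n" by (simp only: of_nat_eq_iff)
  then have "n dvd m * m" by (metis dvd_add_times_triv_right_iff dvd_triv_right mult.commute mult.left_commute)
  then have "n dvd m" using cop by (simp add: coprime_commute coprime_dvd_mult_right_iff)
  then have "n = 1" using cop coprime_common_divisor_nat by simp
  then show False using fib_slope_bounds unfolding m by (cases m) auto
qed

lemma frac_fib_slope: "frac fib_slope = fib_slope"
  using fib_slope_bounds by (simp add: frac_eq)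

lemma frac_add_fib_slope:
  "frac (x + fib_slope) = (if frac x + fib_slope < 1 then frac x + fib_slope else frac x + fib_slope - 1)"
  using frac_add[of x fib_slope] by (simp add: frac_fib_slope)

lemma mech_word_fib_slope_iff: "mech_word fib_slope j = 0 \<longleftrightarrow> frac (real (Suc j) * fib_slope) + fib_slope < 1"
  unfolding mech_word_def by auto

text \<open>image_pos j is the length of the image of the first j letters of mech_word fib_slope under
  the substitution, that is, the position where the image of letter j starts.\<close>
fun image_pos :: "nat \<Rightarrow> nat" where
  "image_pos 0 = 0"
| "image_pos (Suc j) = image_pos j + (if mech_word fib_slope j = 0 then 2 else 1)"

lemma frac_image_pos:
  "frac (real (Suc (image_pos j)) * fib_slope) = (1 - frac (real (Suc j) * fib_slope)) * (1 - fib_slope)"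
proof (induction j)
  case 0
  show ?case using frac_fib_slope fib_slope_sq by (simp add: algebra_simps)
next
  case (Suc j)
  define t where "t = frac (real (Suc j) * fib_slope)"
  define t' where "t' = frac (real (Suc (Suc j)) * fib_slope)"
  define X where "X = real (Suc (image_pos j)) * fib_slope"
  have "real (Suc (Suc j)) * fib_slope = real (Suc j) * fib_slope + fib_slope"
    by (simp add: algebra_simps)
  then have t': "t' = (if t + fib_slope < 1 then t + fib_slope else t + fib_slope - 1)"
    unfolding t'_def t_def using frac_add_fib_slope by simp
  have t'_bounds: "0 < t'" "t' < 1"
    unfolding t'_def using frac_mult_irrational_pos[OF fib_slope_irrational, of "Suc (Suc j)"] frac_lt_1 by auto
  have X: "X = of_int \<lfloor>X\<rfloor> + (1 - t) * (1 - fib_slope)"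
    using Suc unfolding X_def t_def by (simp add: frac_def)
  have "real (Suc (image_pos (Suc j))) * fib_slope
      = of_int (\<lfloor>X\<rfloor> + (if t + fib_slope < 1 then 1 else 0)) + (1 - t') * (1 - fib_slope)"
    using X t' fib_slope_sq mech_word_fib_slope_iff[of j]
    unfolding X_def t_def by (auto simp: algebra_simps)
  moreover have "(1 - t') * (1 - fib_slope) \<in> {0..<1}"
  proof -
    have "(1 - t') * (1 - fib_slope) \<le> 1 - t'"
      using t'_bounds fib_slope_bounds by (intro mult_left_le) auto
    then have "(1 - t') * (1 - fib_slope) < 1" using t'_bounds by linarith
    moreover have "0 \<le> (1 - t') * (1 - fib_slope)"
      using t'_bounds fib_slope_bounds by simp
    ultimately show ?thesis by simp
  qed
  ultimately have "frac (real (Suc (image_pos (Suc j))) * fib_slope) = (1 - t') * (1 - fib_slope)"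
    by (simp only: frac_add_of_int_left frac_eq_id)
  then show ?case unfolding t'_def .
qed

lemma mech_word_image_pos: "mech_word fib_slope (image_pos j) = 0"
proof -
  have "0 < frac (real (Suc j) * fib_slope)"
    using frac_mult_irrational_pos[OF fib_slope_irrational] by blast
  then have "(1 - frac (real (Suc j) * fib_slope)) * (1 - fib_slope) < 1 * (1 - fib_slope)"
    using fib_slope_bounds by (intro mult_strict_right_mono) auto
  then show ?thesis unfolding mech_word_fib_slope_iff frac_image_pos by simp
qed

lemma mech_word_Suc_image_pos:
  assumes "mech_word fib_slope j = 0"
  shows "mech_word fib_slope (Suc (image_pos j)) = 1"
proof -
  define t where "t = frac (real (Suc j) * fib_slope)"
  have t: "0 < t" "t < 1 - fib_slope"
    using assms frac_mult_irrational_pos[OF fib_slope_irrational, of "Suc j"]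
    unfolding t_def mech_word_fib_slope_iff by auto
  have "(1 - t) * (1 - fib_slope) < 1 * (1 - fib_slope)"
    using t fib_slope_bounds by (intro mult_strict_right_mono) auto
  then have "frac (real (Suc (Suc (image_pos j))) * fib_slope) = (1 - t) * (1 - fib_slope) + fib_slope"
    using frac_add_fib_slope[of "real (Suc (image_pos j)) * fib_slope"]
    unfolding frac_image_pos t_def by (simp add: algebra_simps)
  moreover have "fib_slope * (1 - fib_slope) < (1 - t) * (1 - fib_slope)"
    using t fib_slope_bounds by (intro mult_strict_right_mono) auto
  ultimately show ?thesis
    unfolding mech_word_def t_def using fib_slope_sq by (simp add: algebra_simps)
qed

lemma fib_subst_mech_word:
  assumes "\<forall>t<length w. w ! t = mech_word fib_slope (j + t)"
  shows "\<forall>i<length (fib_subst w). fib_subst w ! i = mech_word fib_slope (image_pos j + i)"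
  using assms
proof (induction w arbitrary: j)
  case Nil
  then show ?case by simp
next
  case (Cons a w)
  have a: "a = mech_word fib_slope j" using Cons.prems by force
  have IH: "\<forall>i<length (fib_subst w). fib_subst w ! i = mech_word fib_slope (image_pos (Suc j) + i)"
    using Cons.prems by (intro Cons.IH) auto
  show ?case
  proof (intro allI impI)
    fix i assume i: "i < length (fib_subst (a # w))"
    show "fib_subst (a # w) ! i = mech_word fib_slope (image_pos j + i)"
    proof (cases "a = 0")
      case True
      then have pos: "image_pos (Suc j) = image_pos j + 2" using a by simp
      consider "i = 0" | "i = 1" | "i \<ge> 2" by linarith
      then show ?thesis
      proof cases
        case 3
        then have "fib_subst (a # w) ! i = fib_subst w ! (i - 2)" "i - 2 < length (fib_subst w)"
          using True i by (simp_all add: nth_append numeral_2_eq_2)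
        then show ?thesis using IH pos 3 by simp
      qed (use True a mech_word_image_pos mech_word_Suc_image_pos in simp_all)
    next
      case False
      then have pos: "image_pos (Suc j) = image_pos j + 1" using a by simp
      show ?thesis
      proof (cases i)
        case (Suc i')
        then have "fib_subst (a # w) ! i = fib_subst w ! i'" "i' < length (fib_subst w)"
          using False i by simp_all
        then show ?thesis using IH pos Suc by simp
      qed (use False mech_word_image_pos in simp)
    qed
  qed
qed

lemma length_fib_subst: "length (fib_subst w) = length w + length (filter (\<lambda>a. a = 0) w)"
  by (induction w) auto

lemma fib_subst_iterate_mech_word:
  defines "w n \<equiv> (fib_subst ^^ n) [0]"
  shows "n < length (w n) \<and> (\<forall>i<length (w n). w n ! i = mech_word fib_slope i)"
proof (induction n)
  case 0
  have "mech_word fib_slope 0 = 0" using mech_word_image_pos[of 0] by simp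
  then show ?case unfolding w_def by simp
next
  case (Suc n)
  have len: "0 < length (w n)" using Suc by auto
  then have "w n ! 0 = 0" using Suc mech_word_image_pos[of 0] by simp
  then have "0 \<in> set (w n)" using len nth_mem by force
  then have "length (w n) < length (w (Suc n))"
    unfolding w_def by (simp add: length_fib_subst filter_empty_conv)
  moreover have "\<forall>i<length (w (Suc n)). w (Suc n) ! i = mech_word fib_slope i"
    using fib_subst_mech_word[of "w n" 0] Suc unfolding w_def by simp
  ultimately show ?case using Suc by simp
qed

lemma fib_word_eq_mech_word: "fib_word = mech_word fib_slope"
proof
  fix n
  show "fib_word n = mech_word fib_slope n"
    using fib_subst_iterate_mech_word[of n] unfolding fib_word_def by simp
qed

section \<open>Ultrafilters on nat\<close>

lemma is_ultrafilter_UNIV: "is_ultrafilter p \<Longrightarrow> UNIV \<in> p"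
  unfolding is_ultrafilter_def by blast

lemma is_ultrafilter_empty: "is_ultrafilter p \<Longrightarrow> {} \<notin> p"
  unfolding is_ultrafilter_def by blast

lemma is_ultrafilter_mono: "is_ultrafilter p \<Longrightarrow> A \<in> p \<Longrightarrow> A \<subseteq> B \<Longrightarrow> B \<in> p"
  unfolding is_ultrafilter_def by blast

lemma is_ultrafilter_Int_iff: "is_ultrafilter p \<Longrightarrow> A \<inter> B \<in> p \<longleftrightarrow> A \<in> p \<and> B \<in> p"
  unfolding is_ultrafilter_def by (meson inf_sup_ord(1) inf_sup_ord(2))

lemma is_ultrafilter_Compl_iff: "is_ultrafilter p \<Longrightarrow> - A \<in> p \<longleftrightarrow> A \<notin> p"
  unfolding is_ultrafilter_def by (metis Compl_disjoint)

lemma is_ultrafilter_Un: "is_ultrafilter p \<Longrightarrow> A \<union> B \<in> p \<Longrightarrow> A \<in> p \<or> B \<in> p"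
  by (metis Compl_Un double_compl is_ultrafilter_Compl_iff is_ultrafilter_Int_iff)

lemma is_ultrafilter_subset_eq: "is_ultrafilter p \<Longrightarrow> is_ultrafilter q \<Longrightarrow> p \<subseteq> q \<Longrightarrow> p = q"
  by (metis is_ultrafilter_Compl_iff subsetD subsetI subset_antisym)

lemma nonprincipal_ultrafilter_finite:
  assumes "is_ultrafilter p" "\<forall>n. {n} \<notin> p" "finite F"
  shows "F \<notin> p"
  using assms(3)
proof (induction F rule: finite_induct)
  case empty
  then show ?case using assms is_ultrafilter_empty by blast
next
  case (insert a F)
  then show ?case using is_ultrafilter_Un[OF assms(1), of "{a}" F] assms(2) by auto
qed

lemma mem_betaN_iff: "p \<in> betaN \<longleftrightarrow> is_ultrafilter p"
  unfolding betaN_def by simp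

lemma mem_uf_plus_iff: "A \<in> uf_plus p q \<longleftrightarrow> {n. {m. m + n \<in> A} \<in> p} \<in> q"
  unfolding uf_plus_def by simp

lemma uf_plus_assoc: "uf_plus (uf_plus p q) r = uf_plus p (uf_plus q r)"
  unfolding uf_plus_def by (simp add: add.assoc add.commute add.left_commute)

lemma is_ultrafilter_uf_plus:
  assumes p: "is_ultrafilter p" and q: "is_ultrafilter q"
  shows "is_ultrafilter (uf_plus p q)"
proof -
  have shift_Int: "{n. {m. m + n \<in> A \<inter> B} \<in> p} = {n. {m. m + n \<in> A} \<in> p} \<inter> {n. {m. m + n \<in> B} \<in> p}"
    for A B
  proof -
    have "{m. m + n \<in> A \<inter> B} = {m. m + n \<in> A} \<inter> {m. m + n \<in> B}" for n by auto
    then show ?thesis using is_ultrafilter_Int_iff[OF p] by auto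
  qed
  have shift_Compl: "{n. {m. m + n \<in> - A} \<in> p} = - {n. {m. m + n \<in> A} \<in> p}" for A
  proof -
    have "{m. m + n \<in> - A} = - {m. m + n \<in> A}" for n by auto
    then show ?thesis using is_ultrafilter_Compl_iff[OF p] by auto
  qed
  have shift_mono: "{n. {m. m + n \<in> A} \<in> p} \<subseteq> {n. {m. m + n \<in> B} \<in> p}" if "A \<subseteq> B" for A B
    using that is_ultrafilter_mono[OF p, of "{m. m + _ \<in> A}" "{m. m + _ \<in> B}"] by blast
  show ?thesis
    unfolding is_ultrafilter_def mem_uf_plus_iff
    using p q shift_Int shift_Compl shift_mono
    by (auto simp: is_ultrafilter_UNIV is_ultrafilter_empty is_ultrafilter_Int_iff is_ultrafilter_Compl_iff)
      (meson is_ultrafilter_mono)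
qed

section \<open>Idempotents, IP sets and IP* sets\<close>

definition idem_pick :: "nat set set \<Rightarrow> nat set \<Rightarrow> nat" where
  "idem_pick p A = (SOME n. n \<in> A \<and> {m. m + n \<in> A} \<in> p)"

lemma idem_pick:
  assumes "is_ultrafilter p" "uf_plus p p = p" "A \<in> p"
  shows "idem_pick p A \<in> A" "{m. m + idem_pick p A \<in> A} \<in> p"
proof -
  have "{n. {m. m + n \<in> A} \<in> p} \<in> p" using assms mem_uf_plus_iff by metis
  then have "A \<inter> {n. {m. m + n \<in> A} \<in> p} \<in> p"
    using is_ultrafilter_Int_iff[OF assms(1)] assms(3) by simp
  then have "A \<inter> {n. {m. m + n \<in> A} \<in> p} \<noteq> {}"
    using is_ultrafilter_empty[OF assms(1)] by auto
  then obtain n where "n \<in> A \<and> {m. m + n \<in> A} \<in> p" by blast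
  then show "idem_pick p A \<in> A" "{m. m + idem_pick p A \<in> A} \<in> p"
    unfolding idem_pick_def using someI[of "\<lambda>n. n \<in> A \<and> {m. m + n \<in> A} \<in> p"] by blast+
qed

primrec galvin_glazer_set :: "nat set set \<Rightarrow> nat set \<Rightarrow> nat \<Rightarrow> nat set" where
  "galvin_glazer_set p A 0 = A"
| "galvin_glazer_set p A (Suc k) =
     (let B = galvin_glazer_set p A k; x = idem_pick p B in B \<inter> {m. m + x \<in> B} \<inter> {x<..})"

lemma finite_sum_mem_Min:
  fixes x :: "nat \<Rightarrow> nat"
  assumes x: "\<And>k. x k \<in> B k" and shift: "\<And>k. B (Suc k) \<subseteq> {m. m + x k \<in> B k}"
    and antimono: "\<And>i j. i \<le> j \<Longrightarrow> B j \<subseteq> B i"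
  shows "finite F \<Longrightarrow> F \<noteq> {} \<Longrightarrow> sum x F \<in> B (Min F)"
proof (induction "card F" arbitrary: F rule: less_induct)
  case less
  define i where "i = Min F"
  define F' where "F' = F - {i}"
  have i: "i \<in> F" unfolding i_def using less.prems by simp
  show ?case
  proof (cases "F' = {}")
    case True
    then have "F = {i}" using i unfolding F'_def by auto
    then show ?thesis using x[of i] by simp
  next
    case False
    have "finite F'" "card F' < card F"
      unfolding F'_def using i less.prems by (simp_all add: card_gt_0_iff)
    then have "sum x F' \<in> B (Min F')" using less.hyps False by simp
    moreover have "i < Min F'"
      using False \<open>finite F'\<close> less.prems unfolding F'_def i_def
      by (metis DiffE Min_in Min_le insertCI le_neq_implies_less)
    ultimately have "sum x F' \<in> B (Suc i)" using antimono[of "Suc i" "Min F'"] by auto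
    then have "sum x F' + x i \<in> B i" using shift by blast
    moreover have "sum x F = x i + sum x F'"
      unfolding F'_def using less.prems i by (simp add: sum.remove)
    ultimately show ?thesis unfolding i_def by (simp add: add.commute)
  qed
qed

theorem IP_set_if_mem_nonprincipal_idempotent:
  assumes p: "is_ultrafilter p" "uf_plus p p = p" "\<forall>n. {n} \<notin> p" and A: "A \<in> p"
  shows "IP_set A"
proof -
  define B where "B = galvin_glazer_set p A"
  define x where "x k = idem_pick p (B k)" for k
  have B_Suc: "B (Suc k) = B k \<inter> {m. m + x k \<in> B k} \<inter> {x k<..}" for k
    unfolding B_def x_def by (simp add: Let_def)
  have B_mem: "B k \<in> p" for k
  proof (induction k)
    case 0
    then show ?case using A unfolding B_def by simp
  next
    case (Suc k)
    have "{..x k} \<notin> p" using nonprincipal_ultrafilter_finite[OF p(1,3)] by simp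
    then have "{x k<..} \<in> p" using is_ultrafilter_Compl_iff[OF p(1), of "{..x k}"]
      by (simp add: Compl_atMost)
    then show ?case
      using Suc idem_pick(2)[OF p(1,2) Suc] is_ultrafilter_Int_iff[OF p(1)]
      unfolding B_Suc x_def by simp
  qed
  have x_mem: "x k \<in> B k" for k
    unfolding x_def using idem_pick(1)[OF p(1,2) B_mem] .
  have B_antimono: "i \<le> j \<Longrightarrow> B j \<subseteq> B i" for i j
    using lift_Suc_antimono_le[of B] B_Suc by blast
  have "strict_mono x"
    unfolding strict_mono_Suc_iff using x_mem B_Suc by blast
  have B_shift: "B (Suc k) \<subseteq> {m. m + x k \<in> B k}" for k
    unfolding B_Suc by blast
  have "sum x F \<in> A" if "finite F" "F \<noteq> {}" for F
    using finite_sum_mem_Min[of x B, OF x_mem B_shift B_antimono that] B_antimono[of 0 "Min F"]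
    unfolding B_def by auto
  then show ?thesis unfolding IP_set_def using \<open>strict_mono x\<close> by auto
qed

lemma principal_idempotent_eq_0:
  assumes "is_ultrafilter p" "uf_plus p p = p" "{n} \<in> p"
  shows "n = 0"
proof -
  have "{k. {m. m + k \<in> {n}} \<in> p} \<in> p" using assms mem_uf_plus_iff by metis
  then have "{n} \<inter> {k. {m. m + k \<in> {n}} \<in> p} \<noteq> {}"
    using assms is_ultrafilter_Int_iff is_ultrafilter_empty by metis
  then have "{m. m + n = n} \<in> p" by auto
  then have "{0} \<inter> {n} \<in> p" using assms is_ultrafilter_Int_iff by simp
  then have "{0} \<inter> {n} \<noteq> {}" using assms(1) is_ultrafilter_empty by metis
  then show ?thesis by auto
qed

lemma IP_star_set_mem_idempotent:
  assumes p: "is_ultrafilter p" "uf_plus p p = p" and A: "IP_star_set A" "0 \<in> A"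
  shows "A \<in> p"
proof (cases "\<forall>n. {n} \<notin> p")
  case True
  show ?thesis
  proof (rule ccontr)
    assume "A \<notin> p"
    then have "IP_set (- A)"
      using IP_set_if_mem_nonprincipal_idempotent[OF p True] is_ultrafilter_Compl_iff[OF p(1)] by blast
    then show False using A(1) unfolding IP_star_set_def by blast
  qed
next
  case False
  then obtain n where "{n} \<in> p" by blast
  with principal_idempotent_eq_0[OF p] have "{0} \<in> p" by blast
  then show ?thesis using is_ultrafilter_mono[OF p(1)] A(2) by blast
qed

lemma IP_star_set_mono: "IP_star_set A \<Longrightarrow> A \<subseteq> B \<Longrightarrow> IP_star_set B"
  unfolding IP_star_set_def by blast

lemma IP_star_set_imp_central_star: "IP_star_set A \<Longrightarrow> central_star A"
  unfolding central_star_def minimal_idempotent_def mem_betaN_iff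
  using IP_set_if_mem_nonprincipal_idempotent is_ultrafilter_Compl_iff IP_star_set_def
  by (metis Compl_disjoint)

lemma central_imp_IP_set: "central A \<Longrightarrow> IP_set A"
  unfolding central_def minimal_idempotent_def mem_betaN_iff
  using IP_set_if_mem_nonprincipal_idempotent by blast

lemma frac_diff_near_0:
  assumes "\<bar>frac y - frac x\<bar> < d"
  shows "frac (y - x) < d \<or> 1 - d < frac (y - x)"
proof (cases "frac x \<le> frac y")
  case True
  then show ?thesis using assms frac_diff_pos[OF True] by auto
next
  case False
  then show ?thesis using assms frac_diff_neg[of y x] by auto
qed

lemma floor_mult_eq_imp_close:
  fixes a b :: real
  assumes "N > 0" "\<lfloor>real N * a\<rfloor> = \<lfloor>real N * b\<rfloor>"
  shows "\<bar>b - a\<bar> < 1 / real N"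
proof -
  have "\<bar>real N * b - real N * a\<bar> < 1" using assms(2) by linarith
  then have "real N * \<bar>b - a\<bar> < 1" by (simp add: abs_mult right_diff_distrib[symmetric])
  then show ?thesis using assms(1) by (simp add: field_simps)
qed

theorem IP_star_set_bohr_nbhd:
  assumes "\<delta> > 0"
  shows "IP_star_set (bohr_nbhd \<gamma> \<delta>)"
  unfolding IP_star_set_def
proof (intro allI impI)
  fix B assume "IP_set B"
  then obtain x :: "nat \<Rightarrow> nat" where x: "\<forall>F. finite F \<and> F \<noteq> {} \<longrightarrow> sum x F \<in> B"
    unfolding IP_set_def by blast
  obtain N :: nat where N: "N > 0" "1 / real N < \<delta>"
    by (metis assms gr_zeroI inverse_eq_divide real_arch_inverse)
  define fr where "fr j = frac (real (sum x {..<j}) * \<gamma>)" for j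
  define bin where "bin j = \<lfloor>real N * fr j\<rfloor>" for j
  \<comment> \<open>Pigeonhole: N + 1 partial sums, N bins of width 1/N for the fractional parts.\<close>
  have "bin ` {..N} \<subseteq> {0..<int N}"
  proof
    fix b assume "b \<in> bin ` {..N}"
    then obtain j where b: "b = bin j" by auto
    have "real N * fr j < real N * 1"
      using N frac_lt_1 unfolding fr_def by (intro mult_strict_left_mono) auto
    then show "b \<in> {0..<int N}" unfolding b bin_def fr_def by (simp add: floor_less_iff)
  qed
  then have "card (bin ` {..N}) < card {..N}"
    using card_mono[of "{0..<int N}" "bin ` {..N}"] by simp
  then obtain a b where ab: "a < b" "bin a = bin b"
    using pigeonhole[of bin "{..N}"] unfolding inj_on_def by (metis linorder_neqE_nat)
  have "\<bar>fr b - fr a\<bar> < \<delta>"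
    using floor_mult_eq_imp_close[OF N(1)] ab(2) N(2) unfolding bin_def by fastforce
  moreover have "sum x {..<b} = sum x {..<a} + sum x {a..<b}"
    using sum.atLeastLessThan_concat[of 0 a b x] ab(1) by (simp add: lessThan_atLeast0)
  then have "real (sum x {a..<b}) * \<gamma> = real (sum x {..<b}) * \<gamma> - real (sum x {..<a}) * \<gamma>"
    by (simp only: of_nat_add distrib_right add_diff_cancel_left')
  ultimately have "sum x {a..<b} \<in> bohr_nbhd \<gamma> \<delta>"
    using frac_diff_near_0 unfolding bohr_nbhd_def fr_def by simp
  moreover have "sum x {a..<b} \<in> B" using x ab(1) by auto
  ultimately show "bohr_nbhd \<gamma> \<delta> \<inter> B \<noteq> {}" by blast
qed

section \<open>Existence of ultrafilters and compactness of betaN\<close>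

definition nat_filter :: "nat set set \<Rightarrow> bool" where
  "nat_filter G \<longleftrightarrow> UNIV \<in> G \<and> {} \<notin> G \<and> (\<forall>A\<in>G. \<forall>B. A \<subseteq> B \<longrightarrow> B \<in> G) \<and> (\<forall>A\<in>G. \<forall>B\<in>G. A \<inter> B \<in> G)"

lemma maximal_nat_filter_is_ultrafilter:
  assumes M: "nat_filter M" and max: "\<And>G. nat_filter G \<Longrightarrow> M \<subseteq> G \<Longrightarrow> G = M"
  shows "is_ultrafilter M"
proof -
  have "A \<in> M \<or> - A \<in> M" for A
  proof (rule ccontr)
    assume A: "\<not> (A \<in> M \<or> - A \<in> M)"
    have meet: "B \<inter> A \<noteq> {}" if "B \<in> M" for B
      using that A M unfolding nat_filter_def by (metis Int_commute disjoint_eq_subset_Compl)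
    define M' where "M' = {X. \<exists>B\<in>M. B \<inter> A \<subseteq> X}"
    have "nat_filter M'"
      unfolding nat_filter_def
    proof (intro conjI ballI allI impI)
      show "UNIV \<in> M'" using M unfolding M'_def nat_filter_def by blast
      show "{} \<notin> M'" using meet unfolding M'_def by blast
      show "Y \<in> M'" if "X \<in> M'" "X \<subseteq> Y" for X Y using that unfolding M'_def by blast
      show "X \<inter> Y \<in> M'" if XY: "X \<in> M'" "Y \<in> M'" for X Y
      proof -
        obtain B1 B2 where "B1 \<in> M" "B2 \<in> M" "B1 \<inter> A \<subseteq> X" "B2 \<inter> A \<subseteq> Y"
          using XY unfolding M'_def by blast
        moreover from this have "B1 \<inter> B2 \<in> M" using M unfolding nat_filter_def by blast
        ultimately show ?thesis unfolding M'_def by blast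
      qed
    qed
    moreover have "M \<subseteq> M'" unfolding M'_def by blast
    ultimately have "M' = M" using max by blast
    moreover have "A \<in> M'" using M unfolding M'_def nat_filter_def by blast
    ultimately show False using A by blast
  qed
  then show ?thesis using M unfolding nat_filter_def is_ultrafilter_def by blast
qed

lemma nat_filter_upward_closure:
  assumes F: "F \<noteq> {}" "{} \<notin> F" "\<forall>A\<in>F. \<forall>B\<in>F. \<exists>C\<in>F. C \<subseteq> A \<inter> B"
  shows "nat_filter {B. \<exists>A\<in>F. A \<subseteq> B}"
  unfolding nat_filter_def
proof (intro conjI ballI allI impI)
  show "UNIV \<in> {B. \<exists>A\<in>F. A \<subseteq> B}" using F(1) by blast
  show "{} \<notin> {B. \<exists>A\<in>F. A \<subseteq> B}" using F(2) by auto
  show "B \<in> {B. \<exists>A\<in>F. A \<subseteq> B}" if "A \<in> {B. \<exists>A\<in>F. A \<subseteq> B}" "A \<subseteq> B" for A B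
    using that by blast
  show "A \<inter> B \<in> {B. \<exists>A\<in>F. A \<subseteq> B}"
    if AB: "A \<in> {B. \<exists>A\<in>F. A \<subseteq> B}" "B \<in> {B. \<exists>A\<in>F. A \<subseteq> B}" for A B
  proof -
    obtain A' B' where "A' \<in> F" "A' \<subseteq> A" "B' \<in> F" "B' \<subseteq> B" using AB by blast
    moreover from this obtain C where "C \<in> F" "C \<subseteq> A' \<inter> B'" using F(3) by blast
    ultimately show ?thesis by blast
  qed
qed

lemma nat_filter_chain_Union:
  assumes "C \<noteq> {}" and chain: "\<forall>X\<in>C. \<forall>Y\<in>C. X \<subseteq> Y \<or> Y \<subseteq> X"
    and filters: "\<forall>G\<in>C. nat_filter G"
  shows "nat_filter (\<Union>C)"
  unfolding nat_filter_def
proof (intro conjI ballI allI impI)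
  obtain G where "G \<in> C" using \<open>C \<noteq> {}\<close> by blast
  then show "UNIV \<in> \<Union>C" using filters unfolding nat_filter_def by blast
  show "{} \<notin> \<Union>C" using filters unfolding nat_filter_def by blast
  show "B \<in> \<Union>C" if "A \<in> \<Union>C" "A \<subseteq> B" for A B
    using that filters unfolding nat_filter_def by blast
  show "A \<inter> B \<in> \<Union>C" if AB: "A \<in> \<Union>C" "B \<in> \<Union>C" for A B
  proof -
    obtain X Y where "X \<in> C" "Y \<in> C" "A \<in> X" "B \<in> Y" using AB by blast
    then obtain W where "W \<in> C" "A \<in> W" "B \<in> W" using chain by blast
    then show ?thesis using filters unfolding nat_filter_def by blast
  qed
qed

lemma ultrafilter_extends_filter_base:
  assumes F: "F \<noteq> {}" "{} \<notin> F" "\<forall>A\<in>F. \<forall>B\<in>F. \<exists>C\<in>F. C \<subseteq> A \<inter> B"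
  obtains p where "is_ultrafilter p" "F \<subseteq> p"
proof -
  define Z where "Z = {G. F \<subseteq> G \<and> nat_filter G}"
  have "{B. \<exists>A\<in>F. A \<subseteq> B} \<in> Z"
    unfolding Z_def using nat_filter_upward_closure[OF F] by blast
  then have "Z \<noteq> {}" by blast
  moreover have union: "\<Union>C \<in> Z" if "C \<noteq> {}" "subset.chain Z C" for C
  proof -
    have "C \<subseteq> Z" and chain: "\<forall>X\<in>C. \<forall>Y\<in>C. X \<subseteq> Y \<or> Y \<subseteq> X"
      using that(2) unfolding subset_chain_def by auto
    then have "\<forall>G\<in>C. nat_filter G" "F \<subseteq> \<Union>C" using that(1) unfolding Z_def by blast+
    then show ?thesis unfolding Z_def using nat_filter_chain_Union[OF that(1) chain] by blast
  qed
  ultimately obtain M where M: "M \<in> Z" "\<forall>X\<in>Z. M \<subseteq> X \<longrightarrow> X = M"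
    using subset_Zorn_nonempty[OF _ union] by blast
  have "is_ultrafilter M"
  proof (rule maximal_nat_filter_is_ultrafilter)
    show "nat_filter M" using M(1) unfolding Z_def by blast
    show "G = M" if "nat_filter G" "M \<subseteq> G" for G
      using M that unfolding Z_def by blast
  qed
  then show thesis using M(1) that unfolding Z_def by blast
qed

text \<open>Closed subsets of betaN in the Stone topology: C is closed iff it contains every
  ultrafilter each of whose members belongs to some element of C.\<close>
definition beta_closed :: "nat set set set \<Rightarrow> bool" where
  "beta_closed C \<longleftrightarrow> C \<subseteq> betaN \<and> (\<forall>p. is_ultrafilter p \<and> (\<forall>A\<in>p. \<exists>q\<in>C. A \<in> q) \<longrightarrow> p \<in> C)"

lemma beta_closed_imp_ultrafilter: "beta_closed C \<Longrightarrow> p \<in> C \<Longrightarrow> is_ultrafilter p"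
  unfolding beta_closed_def betaN_def by blast

lemma beta_closed_memI:
  "beta_closed C \<Longrightarrow> is_ultrafilter p \<Longrightarrow> (\<And>A. A \<in> p \<Longrightarrow> \<exists>q\<in>C. A \<in> q) \<Longrightarrow> p \<in> C"
  unfolding beta_closed_def by blast

lemma beta_closed_family_filter_base:
  assumes ne: "\<C> \<noteq> {}" and closed: "\<forall>C\<in>\<C>. beta_closed C \<and> C \<noteq> {}"
    and directed: "\<forall>C1\<in>\<C>. \<forall>C2\<in>\<C>. \<exists>C3\<in>\<C>. C3 \<subseteq> C1 \<inter> C2"
  defines "F \<equiv> {A. \<exists>C\<in>\<C>. \<forall>q\<in>C. A \<in> q}"
  shows "F \<noteq> {}" "{} \<notin> F" "\<forall>A\<in>F. \<forall>B\<in>F. \<exists>C\<in>F. C \<subseteq> A \<inter> B"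
proof -
  have uf: "is_ultrafilter q" if "C \<in> \<C>" "q \<in> C" for C q
    using closed that beta_closed_imp_ultrafilter by blast
  obtain C where "C \<in> \<C>" using ne by blast
  then have "UNIV \<in> F" unfolding F_def using uf is_ultrafilter_UNIV by blast
  then show "F \<noteq> {}" by blast
  show "{} \<notin> F"
  proof
    assume "{} \<in> F"
    then obtain C where "C \<in> \<C>" "\<forall>q\<in>C. {} \<in> q" unfolding F_def by blast
    moreover from this obtain q where "q \<in> C" using closed by blast
    ultimately show False using uf is_ultrafilter_empty by blast
  qed
  show "\<forall>A\<in>F. \<forall>B\<in>F. \<exists>C\<in>F. C \<subseteq> A \<inter> B"
  proof (intro ballI)
    fix A B assume "A \<in> F" "B \<in> F"
    then obtain C1 C2 where C12: "C1 \<in> \<C>" "\<forall>q\<in>C1. A \<in> q" "C2 \<in> \<C>" "\<forall>q\<in>C2. B \<in> q"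
      unfolding F_def by auto
    then obtain C3 where C3: "C3 \<in> \<C>" "C3 \<subseteq> C1 \<inter> C2" using directed by meson
    have "A \<inter> B \<in> q" if "q \<in> C3" for q
    proof -
      have "A \<in> q" "B \<in> q" using C12 C3 that by auto
      then show ?thesis using uf[OF C3(1) that] is_ultrafilter_Int_iff by blast
    qed
    then show "\<exists>C\<in>F. C \<subseteq> A \<inter> B" unfolding F_def using C3(1) by blast
  qed
qed

theorem beta_closed_directed_Inter_nonempty:
  assumes ne: "\<C> \<noteq> {}" and closed: "\<forall>C\<in>\<C>. beta_closed C \<and> C \<noteq> {}"
    and directed: "\<forall>C1\<in>\<C>. \<forall>C2\<in>\<C>. \<exists>C3\<in>\<C>. C3 \<subseteq> C1 \<inter> C2"
  obtains p where "is_ultrafilter p" "\<forall>C\<in>\<C>. p \<in> C"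
proof -
  \<comment> \<open>An ultrafilter containing every set that lies in all members of some C \<in> \<C> lies in each C.\<close>
  define F where "F = {A. \<exists>C\<in>\<C>. \<forall>q\<in>C. A \<in> q}"
  have "F \<noteq> {}" "{} \<notin> F" "\<forall>A\<in>F. \<forall>B\<in>F. \<exists>C\<in>F. C \<subseteq> A \<inter> B"
    unfolding F_def using beta_closed_family_filter_base[OF ne closed directed] by simp_all
  then obtain p where p: "is_ultrafilter p" "F \<subseteq> p"
    by (rule ultrafilter_extends_filter_base)
  have "p \<in> C" if C: "C \<in> \<C>" for C
  proof (rule beta_closed_memI)
    show "beta_closed C" "is_ultrafilter p" using closed C p by auto
    fix A assume "A \<in> p"
    show "\<exists>q\<in>C. A \<in> q"
    proof (rule ccontr)
      assume "\<not> (\<exists>q\<in>C. A \<in> q)"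
      moreover have "is_ultrafilter q" if "q \<in> C" for q
        using closed C that beta_closed_imp_ultrafilter by blast
      ultimately have "\<forall>q\<in>C. - A \<in> q" using is_ultrafilter_Compl_iff by blast
      then have "- A \<in> F" unfolding F_def using C by blast
      then show False using \<open>A \<in> p\<close> p is_ultrafilter_Compl_iff by blast
    qed
  qed
  then show thesis using that p(1) by blast
qed

lemma beta_closed_basic: "beta_closed {p \<in> betaN. F \<subseteq> p}"
  unfolding beta_closed_def mem_betaN_iff
proof (intro conjI allI impI)
  fix p assume p: "is_ultrafilter p \<and> (\<forall>A\<in>p. \<exists>q\<in>{p. is_ultrafilter p \<and> F \<subseteq> p}. A \<in> q)"
  have "A \<in> p" if A: "A \<in> F" for A
  proof (rule ccontr)
    assume "A \<notin> p"
    then have "- A \<in> p" using p is_ultrafilter_Compl_iff by blast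
    then obtain q where "is_ultrafilter q" "F \<subseteq> q" "- A \<in> q" using p by blast
    then show False using A is_ultrafilter_Compl_iff by blast
  qed
  then show "p \<in> {p. is_ultrafilter p \<and> F \<subseteq> p}" using p by blast
qed (auto simp: mem_betaN_iff)

lemma beta_closed_betaN: "beta_closed betaN"
  using beta_closed_basic[of "{}"] by simp

lemma beta_closed_Inter:
  assumes "\<C> \<noteq> {}" "\<forall>C\<in>\<C>. beta_closed C"
  shows "beta_closed (\<Inter>\<C>)"
  unfolding beta_closed_def
proof (intro conjI allI impI)
  show "\<Inter>\<C> \<subseteq> betaN" using assms unfolding beta_closed_def by blast
  fix p assume p: "is_ultrafilter p \<and> (\<forall>A\<in>p. \<exists>q\<in>\<Inter>\<C>. A \<in> q)"
  have "p \<in> C" if "C \<in> \<C>" for C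
  proof (rule beta_closed_memI)
    show "beta_closed C" "is_ultrafilter p" using that assms p by auto
    show "\<exists>q\<in>C. A \<in> q" if "A \<in> p" for A using that p \<open>C \<in> \<C>\<close> by blast
  qed
  then show "p \<in> \<Inter>\<C>" by blast
qed

lemma beta_closed_Int: "beta_closed A \<Longrightarrow> beta_closed B \<Longrightarrow> beta_closed (A \<inter> B)"
  using beta_closed_Inter[of "{A, B}"] by simp

lemma beta_closed_ultrafilter_indexed_Inter_nonempty:
  assumes r: "is_ultrafilter r" and K: "\<And>D. D \<in> r \<Longrightarrow> beta_closed (K D) \<and> K D \<noteq> {}"
    and K_Int: "\<And>D1 D2. D1 \<in> r \<Longrightarrow> D2 \<in> r \<Longrightarrow> K (D1 \<inter> D2) \<subseteq> K D1 \<inter> K D2"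
  obtains c where "is_ultrafilter c" "\<forall>D\<in>r. c \<in> K D"
proof -
  have "K ` r \<noteq> {}" using is_ultrafilter_UNIV[OF r] by blast
  moreover have "\<forall>C\<in>K ` r. beta_closed C \<and> C \<noteq> {}" using K by blast
  moreover have "\<forall>C1\<in>K ` r. \<forall>C2\<in>K ` r. \<exists>C3\<in>K ` r. C3 \<subseteq> C1 \<inter> C2"
  proof (intro ballI)
    fix C1 C2 assume "C1 \<in> K ` r" "C2 \<in> K ` r"
    then obtain D1 D2 where D: "D1 \<in> r" "C1 = K D1" "D2 \<in> r" "C2 = K D2" by blast
    then have "D1 \<inter> D2 \<in> r" using is_ultrafilter_Int_iff[OF r] by blast
    then show "\<exists>C3\<in>K ` r. C3 \<subseteq> C1 \<inter> C2" using K_Int[OF D(1,3)] D(2,4) by blast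
  qed
  ultimately obtain c where "is_ultrafilter c" "\<forall>C\<in>K ` r. c \<in> C"
    by (rule beta_closed_directed_Inter_nonempty)
  then show thesis using that by blast
qed

lemma beta_closed_uf_plus_image:
  assumes C: "beta_closed C" and x: "is_ultrafilter x"
  shows "beta_closed (uf_plus x ` C)"
  unfolding beta_closed_def
proof (intro conjI allI impI)
  show "uf_plus x ` C \<subseteq> betaN"
    using beta_closed_imp_ultrafilter[OF C] is_ultrafilter_uf_plus[OF x] mem_betaN_iff by auto
  fix r assume "is_ultrafilter r \<and> (\<forall>D\<in>r. \<exists>q\<in>uf_plus x ` C. D \<in> q)"
  then have r: "is_ultrafilter r" and r_C: "\<And>D. D \<in> r \<Longrightarrow> \<exists>c\<in>C. D \<in> uf_plus x c" by blast+
  \<comment> \<open>By compactness some c \<in> C has D \<in> x + c for all D \<in> r; then r = x + c.\<close>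
  define K where "K D = {c \<in> C. D \<in> uf_plus x c}" for D
  have K_eq: "K D = C \<inter> {c \<in> betaN. {{n. {m. m + n \<in> D} \<in> x}} \<subseteq> c}" for D
    unfolding K_def mem_uf_plus_iff using beta_closed_imp_ultrafilter[OF C] mem_betaN_iff by auto
  have "beta_closed (K D) \<and> K D \<noteq> {}" if "D \<in> r" for D
  proof
    show "beta_closed (K D)" unfolding K_eq by (intro beta_closed_Int C beta_closed_basic)
    show "K D \<noteq> {}" using r_C[OF that] unfolding K_def by blast
  qed
  moreover have "K (D1 \<inter> D2) \<subseteq> K D1 \<inter> K D2" for D1 D2
  proof
    fix c assume "c \<in> K (D1 \<inter> D2)"
    then have "c \<in> C" "D1 \<inter> D2 \<in> uf_plus x c" unfolding K_def by blast+
    moreover from this have "is_ultrafilter (uf_plus x c)"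
      using is_ultrafilter_uf_plus[OF x beta_closed_imp_ultrafilter[OF C]] by blast
    ultimately show "c \<in> K D1 \<inter> K D2" unfolding K_def using is_ultrafilter_Int_iff by blast
  qed
  ultimately obtain c where c: "is_ultrafilter c" "\<forall>D\<in>r. c \<in> K D"
    by (rule beta_closed_ultrafilter_indexed_Inter_nonempty[OF r])
  then have "r \<subseteq> uf_plus x c" unfolding K_def by blast
  then have "r = uf_plus x c" by (rule is_ultrafilter_subset_eq[OF r is_ultrafilter_uf_plus[OF x c(1)]])
  moreover have "c \<in> C" using c(2) is_ultrafilter_UNIV[OF r] unfolding K_def by blast
  ultimately show "r \<in> uf_plus x ` C" by blast
qed

lemma beta_closed_uf_plus_fixed:
  assumes A: "beta_closed A" and x: "is_ultrafilter x"
  shows "beta_closed {a \<in> A. uf_plus x a = x}"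
  unfolding beta_closed_def
proof (intro conjI allI impI)
  show "{a \<in> A. uf_plus x a = x} \<subseteq> betaN" using A unfolding beta_closed_def by blast
  fix p assume p: "is_ultrafilter p \<and> (\<forall>D\<in>p. \<exists>q\<in>{a \<in> A. uf_plus x a = x}. D \<in> q)"
  then have p_uf: "is_ultrafilter p" and "p \<in> A" using beta_closed_memI[OF A] by blast+
  have "D \<in> uf_plus x p" if D: "D \<in> x" for D
  proof (rule ccontr)
    assume "D \<notin> uf_plus x p"
    then have "- {n. {m. m + n \<in> D} \<in> x} \<in> p"
      using is_ultrafilter_Compl_iff[OF p_uf] mem_uf_plus_iff by simp
    then obtain q where q: "q \<in> A" "uf_plus x q = x" "- {n. {m. m + n \<in> D} \<in> x} \<in> q"
      using p by blast
    then have "{n. {m. m + n \<in> D} \<in> x} \<in> q" using D mem_uf_plus_iff by metis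
    then show False
      using q(3) is_ultrafilter_Compl_iff[OF beta_closed_imp_ultrafilter[OF A q(1)]] by blast
  qed
  then have "x = uf_plus x p"
    using is_ultrafilter_subset_eq[OF x is_ultrafilter_uf_plus[OF x p_uf]] by blast
  then show "p \<in> {a \<in> A. uf_plus x a = x}" using \<open>p \<in> A\<close> by simp
qed

section \<open>Idempotents in closed semigroups and minimal right ideals\<close>

lemma Zorn_minimal_Inter:
  assumes "\<A> \<noteq> {}" and ch: "\<And>\<C>. \<C> \<noteq> {} \<Longrightarrow> subset.chain \<A> \<C> \<Longrightarrow> \<Inter>\<C> \<in> \<A>"
  shows "\<exists>M\<in>\<A>. \<forall>X\<in>\<A>. X \<subseteq> M \<longrightarrow> X = M"
proof -
  have union: "\<Union>\<C> \<in> uminus ` \<A>" if "\<C> \<noteq> {}" "subset.chain (uminus ` \<A>) \<C>" for \<C>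
  proof -
    have C: "\<C> \<subseteq> uminus ` \<A>" "\<forall>X\<in>\<C>. \<forall>Y\<in>\<C>. X \<subseteq> Y \<or> Y \<subseteq> X"
      using that(2) unfolding subset_chain_def by blast+
    have "uminus ` \<C> \<subseteq> \<A>"
    proof
      fix X assume "X \<in> uminus ` \<C>"
      then obtain Y where "Y \<in> \<C>" "X = - Y" by blast
      moreover from this obtain Z where "Z \<in> \<A>" "Y = - Z" using C(1) by blast
      ultimately show "X \<in> \<A>" by simp
    qed
    moreover have "\<forall>X\<in>uminus ` \<C>. \<forall>Y\<in>uminus ` \<C>. X \<subseteq> Y \<or> Y \<subseteq> X"
      using C(2) by blast
    ultimately have "subset.chain \<A> (uminus ` \<C>)" unfolding subset_chain_def ..
    moreover have "uminus ` \<C> \<noteq> {}" using that(1) by blast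
    ultimately have "\<Inter>(uminus ` \<C>) \<in> \<A>" by (intro ch)
    moreover have "\<Union>\<C> = - \<Inter>(uminus ` \<C>)" by auto
    ultimately show ?thesis by blast
  qed
  have "uminus ` \<A> \<noteq> {}" using assms(1) by blast
  then obtain M where M: "M \<in> uminus ` \<A>" "\<forall>X\<in>uminus ` \<A>. M \<subseteq> X \<longrightarrow> X = M"
    using subset_Zorn_nonempty[OF _ union] by blast
  have "- M \<in> \<A>" using M(1) by auto
  moreover have "X = - M" if "X \<in> \<A>" "X \<subseteq> - M" for X
  proof -
    have "- X \<in> uminus ` \<A>" "M \<subseteq> - X" using that by auto
    then show ?thesis using M(2) by force
  qed
  ultimately show ?thesis by blast
qed
lemma beta_closed_chain_Inter_nonempty:
  assumes "\<C> \<noteq> {}" "subset.chain \<A> \<C>" "\<forall>C\<in>\<C>. beta_closed C \<and> C \<noteq> {}"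
  shows "\<Inter>\<C> \<noteq> {}"
proof -
  have "\<forall>C1\<in>\<C>. \<forall>C2\<in>\<C>. \<exists>C3\<in>\<C>. C3 \<subseteq> C1 \<inter> C2"
  proof (intro ballI)
    fix C1 C2 assume C12: "C1 \<in> \<C>" "C2 \<in> \<C>"
    then have "C1 \<subseteq> C2 \<or> C2 \<subseteq> C1" using assms(2) unfolding subset_chain_def by blast
    then show "\<exists>C3\<in>\<C>. C3 \<subseteq> C1 \<inter> C2" using C12 by blast
  qed
  then obtain p where "\<forall>C\<in>\<C>. p \<in> C"
    using beta_closed_directed_Inter_nonempty[OF assms(1,3)] by blast
  then show ?thesis by blast
qed

definition uf_subsemigroup :: "nat set set set \<Rightarrow> bool" where
  "uf_subsemigroup A \<longleftrightarrow> (\<forall>a\<in>A. \<forall>b\<in>A. uf_plus a b \<in> A)"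

definition uf_right_ideal :: "nat set set set \<Rightarrow> bool" where
  "uf_right_ideal R \<longleftrightarrow> (\<forall>r\<in>R. \<forall>q\<in>betaN. uf_plus r q \<in> R)"

lemma uf_subsemigroup_uf_plus_image:
  assumes "uf_subsemigroup A" "x \<in> A"
  shows "uf_subsemigroup (uf_plus x ` A)"
  unfolding uf_subsemigroup_def
proof (intro ballI)
  fix a b assume "a \<in> uf_plus x ` A" "b \<in> uf_plus x ` A"
  then obtain a' b' where ab: "a' \<in> A" "b' \<in> A" "a = uf_plus x a'" "b = uf_plus x b'"
    by blast
  then have "uf_plus a' (uf_plus x b') \<in> A" using assms unfolding uf_subsemigroup_def by blast
  then show "uf_plus a b \<in> uf_plus x ` A" unfolding ab by (simp add: uf_plus_assoc)
qed

lemma uf_subsemigroup_fixed: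
  assumes "uf_subsemigroup A"
  shows "uf_subsemigroup {a \<in> A. uf_plus x a = x}"
  unfolding uf_subsemigroup_def
proof (intro ballI)
  fix a b assume "a \<in> {a \<in> A. uf_plus x a = x}" "b \<in> {a \<in> A. uf_plus x a = x}"
  then have ab: "a \<in> A" "b \<in> A" "uf_plus x a = x" "uf_plus x b = x" by blast+
  then have "uf_plus x (uf_plus a b) = x" by (metis uf_plus_assoc)
  moreover have "uf_plus a b \<in> A" using assms ab(1,2) unfolding uf_subsemigroup_def by blast
  ultimately show "uf_plus a b \<in> {a \<in> A. uf_plus x a = x}" by blast
qed

lemma minimal_beta_closed:
  assumes S: "S \<noteq> {}" "beta_closed S" "P S"
    and P_Inter: "\<And>\<C>. \<C> \<noteq> {} \<Longrightarrow> (\<And>C. C \<in> \<C> \<Longrightarrow> P C) \<Longrightarrow> P (\<Inter>\<C>)"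
  obtains M where "M \<noteq> {}" "beta_closed M" "P M"
    "\<And>X. X \<noteq> {} \<Longrightarrow> beta_closed X \<Longrightarrow> P X \<Longrightarrow> X \<subseteq> M \<Longrightarrow> X = M"
proof -
  define \<A> where "\<A> = {A. A \<noteq> {} \<and> beta_closed A \<and> P A}"
  have "S \<in> \<A>" using S unfolding \<A>_def by simp
  then have "\<A> \<noteq> {}" by blast
  moreover have chain_Inter: "\<Inter>\<C> \<in> \<A>" if ne: "\<C> \<noteq> {}" and chain: "subset.chain \<A> \<C>" for \<C>
  proof -
    have "\<C> \<subseteq> \<A>" using chain unfolding subset_chain_def by blast
    then have \<C>: "\<forall>C\<in>\<C>. beta_closed C \<and> C \<noteq> {}" and P_\<C>: "\<And>C. C \<in> \<C> \<Longrightarrow> P C"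
      unfolding \<A>_def by blast+
    have "\<Inter>\<C> \<noteq> {}" by (rule beta_closed_chain_Inter_nonempty[OF ne chain \<C>])
    moreover have "beta_closed (\<Inter>\<C>)" using beta_closed_Inter[OF ne] \<C> by blast
    moreover have "P (\<Inter>\<C>)" by (rule P_Inter[OF ne P_\<C>])
    ultimately show ?thesis unfolding \<A>_def by simp
  qed
  ultimately have "\<exists>M\<in>\<A>. \<forall>X\<in>\<A>. X \<subseteq> M \<longrightarrow> X = M" by (rule Zorn_minimal_Inter)
  then obtain M where M: "M \<in> \<A>" and M_min: "\<And>X. X \<in> \<A> \<Longrightarrow> X \<subseteq> M \<Longrightarrow> X = M"
    by blast
  show thesis
  proof (rule that)
    show "M \<noteq> {}" "beta_closed M" "P M" using M unfolding \<A>_def by simp_all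
    show "X = M" if "X \<noteq> {}" "beta_closed X" "P X" "X \<subseteq> M" for X
      using M_min that unfolding \<A>_def by simp
  qed
qed

theorem Ellis_Numakura:
  assumes S: "S \<noteq> {}" "beta_closed S" "uf_subsemigroup S"
  obtains e where "e \<in> S" "uf_plus e e = e"
proof -
  have Inter: "\<Inter>\<C> \<subseteq> S \<and> uf_subsemigroup (\<Inter>\<C>)"
    if "\<C> \<noteq> {}" "\<And>C. C \<in> \<C> \<Longrightarrow> C \<subseteq> S \<and> uf_subsemigroup C" for \<C>
  proof
    show "\<Inter>\<C> \<subseteq> S" using that by blast
    show "uf_subsemigroup (\<Inter>\<C>)" using that(2) unfolding uf_subsemigroup_def by blast
  qed
  obtain A where A: "A \<noteq> {}" "beta_closed A" "A \<subseteq> S \<and> uf_subsemigroup A"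
    and A_min: "\<And>X. X \<noteq> {} \<Longrightarrow> beta_closed X \<Longrightarrow> X \<subseteq> S \<and> uf_subsemigroup X \<Longrightarrow> X \<subseteq> A \<Longrightarrow> X = A"
    by (rule minimal_beta_closed[of S "\<lambda>A. A \<subseteq> S \<and> uf_subsemigroup A", OF S(1,2) _ Inter])
      (use S(3) in simp_all)
  have A_sub: "A \<subseteq> S" and A_sg: "uf_subsemigroup A" using A(3) by blast+
  obtain x where x: "x \<in> A" "is_ultrafilter x" using A(1,2) beta_closed_imp_ultrafilter by blast
  \<comment> \<open>Minimality forces first x + A = A and then {a \<in> A. x + a = x} = A.\<close>
  have xA_sub: "uf_plus x ` A \<subseteq> A" using A_sg x(1) unfolding uf_subsemigroup_def by blast
  moreover have "uf_plus x ` A \<noteq> {}" using A(1) by blast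
  moreover have "uf_plus x ` A \<subseteq> S" using xA_sub A_sub by blast
  ultimately have xA: "uf_plus x ` A = A"
    using A_min[OF _ beta_closed_uf_plus_image[OF A(2) x(2)] _ xA_sub]
      uf_subsemigroup_uf_plus_image[OF A_sg x(1)] by blast
  define D where "D = {a \<in> A. uf_plus x a = x}"
  obtain a where "a \<in> A" "x = uf_plus x a" using xA x(1) by (metis imageE)
  then have "D \<noteq> {}" unfolding D_def by blast
  moreover have "uf_subsemigroup D" unfolding D_def using A_sg by (rule uf_subsemigroup_fixed)
  moreover have "beta_closed D" unfolding D_def using A(2) x(2) by (rule beta_closed_uf_plus_fixed)
  moreover have "D \<subseteq> A" unfolding D_def by blast
  moreover from this have "D \<subseteq> S" using A_sub by blast
  ultimately have "D = A" using A_min by blast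
  then show thesis using that x(1) A_sub unfolding D_def by blast
qed

lemma is_ultrafilter_principal: "is_ultrafilter {A. n \<in> A}"
  unfolding is_ultrafilter_def by auto

lemma uf_right_ideal_imp_subsemigroup: "R \<subseteq> betaN \<Longrightarrow> uf_right_ideal R \<Longrightarrow> uf_subsemigroup R"
  unfolding uf_right_ideal_def uf_subsemigroup_def by blast

lemma uf_right_ideal_uf_plus_image:
  assumes "is_ultrafilter x"
  shows "uf_right_ideal (uf_plus x ` betaN)"
  unfolding uf_right_ideal_def
proof (intro ballI)
  fix a q assume "a \<in> uf_plus x ` betaN" "q \<in> betaN"
  then obtain a' where "a' \<in> betaN" "a = uf_plus x a'" by blast
  moreover from this have "uf_plus a' q \<in> betaN"
    using \<open>q \<in> betaN\<close> is_ultrafilter_uf_plus mem_betaN_iff by blast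
  ultimately show "uf_plus a q \<in> uf_plus x ` betaN" by (simp add: uf_plus_assoc)
qed

theorem minimal_right_ideal_subset_smallest_ideal:
  obtains R where "R \<noteq> {}" "beta_closed R" "uf_right_ideal R" "R \<subseteq> smallest_ideal"
proof -
  have betaN_ne: "betaN \<noteq> {}"
    using is_ultrafilter_principal mem_betaN_iff by blast
  have "uf_right_ideal betaN"
    unfolding uf_right_ideal_def using is_ultrafilter_uf_plus mem_betaN_iff by blast
  moreover have Inter: "uf_right_ideal (\<Inter>\<C>)" if \<C>: "\<And>C. C \<in> \<C> \<Longrightarrow> uf_right_ideal C" for \<C>
    unfolding uf_right_ideal_def
  proof (intro ballI InterI)
    fix r q C assume "r \<in> \<Inter>\<C>" "q \<in> betaN" "C \<in> \<C>"
    then show "uf_plus r q \<in> C" using \<C>[of C] unfolding uf_right_ideal_def by blast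
  qed
  ultimately obtain R where R: "R \<noteq> {}" "beta_closed R" "uf_right_ideal R"
    and R_min: "\<And>X. X \<noteq> {} \<Longrightarrow> beta_closed X \<Longrightarrow> uf_right_ideal X \<Longrightarrow> X \<subseteq> R \<Longrightarrow> X = R"
    by (rule minimal_beta_closed[OF betaN_ne beta_closed_betaN]) simp_all
  \<comment> \<open>For x \<in> R \<inter> I, the closed right ideal x + betaN lies in R, so equals R, and lies in I.\<close>
  have "R \<subseteq> I" if "two_sided_ideal I" for I
  proof -
    have I: "I \<noteq> {}" "I \<subseteq> betaN" "\<forall>p\<in>I. \<forall>q\<in>betaN. uf_plus p q \<in> I \<and> uf_plus q p \<in> I"
      using that unfolding two_sided_ideal_def by blast+
    obtain i r where "i \<in> I" "r \<in> R" using I(1) R(1) by blast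
    define x where "x = uf_plus r i"
    have "x \<in> R" unfolding x_def using R(3) \<open>r \<in> R\<close> \<open>i \<in> I\<close> I(2) unfolding uf_right_ideal_def by blast
    have "r \<in> betaN" using R(2) \<open>r \<in> R\<close> beta_closed_imp_ultrafilter mem_betaN_iff by blast
    then have "x \<in> I" unfolding x_def using I(3) \<open>i \<in> I\<close> by blast
    then have x: "is_ultrafilter x" using I(2) mem_betaN_iff by blast
    have "uf_plus x ` betaN \<noteq> {}" using betaN_ne by blast
    moreover have "beta_closed (uf_plus x ` betaN)"
      using beta_closed_uf_plus_image[OF beta_closed_betaN x] .
    moreover have "uf_right_ideal (uf_plus x ` betaN)" using x by (rule uf_right_ideal_uf_plus_image)
    moreover have "uf_plus x ` betaN \<subseteq> R"
      using R(3) \<open>x \<in> R\<close> unfolding uf_right_ideal_def by blast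
    ultimately have "uf_plus x ` betaN = R" by (rule R_min)
    moreover have "uf_plus x ` betaN \<subseteq> I" using I(3) \<open>x \<in> I\<close> by blast
    ultimately show ?thesis by blast
  qed
  then have "R \<subseteq> smallest_ideal" unfolding smallest_ideal_def by blast
  with R show thesis by (rule that)
qed

section \<open>A minimal idempotent concentrated on one-sided Bohr neighbourhoods\<close>

lemma right_nbhd_nonempty:
  assumes "\<gamma> \<notin> \<rat>" "\<delta> > 0"
  shows "right_nbhd \<gamma> \<delta> \<noteq> {}"
proof -
  define a where "a = min \<delta> 1 / 2"
  have a: "0 < a" "a \<le> 1" "2 * a \<le> \<delta>" unfolding a_def using assms(2) by auto
  obtain k where "\<bar>frac (real k * \<gamma>) - a\<bar> < a"
    using Kronecker_approx_1_explicit[OF assms(1), of a a] a by auto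
  then have "k \<in> right_nbhd \<gamma> \<delta>" unfolding right_nbhd_def using a by (auto simp del: frac_gt_0_iff)
  then show ?thesis by blast
qed

lemma right_nbhd_mono: "\<delta> \<le> \<delta>' \<Longrightarrow> right_nbhd \<gamma> \<delta> \<subseteq> right_nbhd \<gamma> \<delta>'"
  unfolding right_nbhd_def by auto

lemma bohr_nbhd_shift_subset_right_nbhd:
  assumes "frac (real n * \<gamma>) = c" "0 < c" "2 * c \<le> \<delta>" "\<delta> \<le> 1"
  shows "bohr_nbhd \<gamma> c \<subseteq> {m. m + n \<in> right_nbhd \<gamma> \<delta>}"
proof
  fix m assume "m \<in> bohr_nbhd \<gamma> c"
  define a where "a = frac (real m * \<gamma>)"
  have a: "0 \<le> a" "a < 1" "a < c \<or> 1 - c < a"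
    using \<open>m \<in> bohr_nbhd \<gamma> c\<close> unfolding a_def bohr_nbhd_def by (auto simp: frac_lt_1)
  have "frac (real (m + n) * \<gamma>) = frac (real m * \<gamma> + real n * \<gamma>)" by (simp add: algebra_simps)
  also have "\<dots> = (if a + c < 1 then a + c else a + c - 1)"
    using frac_add assms(1) unfolding a_def by metis
  finally have "0 < frac (real (m + n) * \<gamma>) \<and> frac (real (m + n) * \<gamma>) < \<delta>"
    using a assms(2-4) by auto
  then show "m \<in> {m. m + n \<in> right_nbhd \<gamma> \<delta>}" unfolding right_nbhd_def by blast
qed

lemma bohr_nbhd_mem_idempotent:
  assumes "is_ultrafilter p" "uf_plus p p = p" "\<epsilon> > 0"
  shows "bohr_nbhd \<gamma> \<epsilon> \<in> p"
  using IP_star_set_mem_idempotent[OF assms(1,2) IP_star_set_bohr_nbhd[OF assms(3)]] assms(3)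
  unfolding bohr_nbhd_def by simp

lemma uf_plus_mem_right_nbhd:
  assumes a: "is_ultrafilter a" "\<forall>\<epsilon>>0. bohr_nbhd \<gamma> \<epsilon> \<in> a"
    and b: "is_ultrafilter b" "\<forall>\<delta>>0. right_nbhd \<gamma> \<delta> \<in> b"
    and "\<delta> > 0"
  shows "right_nbhd \<gamma> \<delta> \<in> uf_plus a b"
proof -
  define \<eta> where "\<eta> = min \<delta> 1 / 2"
  have \<eta>: "\<eta> > 0" "2 * \<eta> \<le> min \<delta> 1" unfolding \<eta>_def using \<open>\<delta> > 0\<close> by auto
  have "right_nbhd \<gamma> \<eta> \<subseteq> {n. {m. m + n \<in> right_nbhd \<gamma> \<delta>} \<in> a}"
  proof
    fix n assume "n \<in> right_nbhd \<gamma> \<eta>"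
    then have c: "0 < frac (real n * \<gamma>)" "2 * frac (real n * \<gamma>) \<le> min \<delta> 1"
      using \<eta>(2) unfolding right_nbhd_def by (auto simp del: frac_gt_0_iff)
    have "bohr_nbhd \<gamma> (frac (real n * \<gamma>)) \<subseteq> {m. m + n \<in> right_nbhd \<gamma> (min \<delta> 1)}"
      using c by (intro bohr_nbhd_shift_subset_right_nbhd) auto
    also have "\<dots> \<subseteq> {m. m + n \<in> right_nbhd \<gamma> \<delta>}"
      using right_nbhd_mono[of "min \<delta> 1" \<delta> \<gamma>] by auto
    moreover have "bohr_nbhd \<gamma> (frac (real n * \<gamma>)) \<in> a" using a(2) c(1) by blast
    ultimately show "n \<in> {n. {m. m + n \<in> right_nbhd \<gamma> \<delta>} \<in> a}"
      using is_ultrafilter_mono[OF a(1)] by blast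
  qed
  moreover have "right_nbhd \<gamma> \<eta> \<in> b" using b(2) \<eta>(1) by blast
  ultimately show ?thesis
    unfolding mem_uf_plus_iff using is_ultrafilter_mono[OF b(1)] by blast
qed

definition right_nbhd_ultrafilters :: "real \<Rightarrow> nat set set set" where
  "right_nbhd_ultrafilters \<gamma> = {p \<in> betaN. right_nbhd \<gamma> ` {0<..} \<subseteq> p}"

lemma mem_right_nbhd_ultrafilters_iff:
  "p \<in> right_nbhd_ultrafilters \<gamma> \<longleftrightarrow> is_ultrafilter p \<and> (\<forall>\<delta>>0. right_nbhd \<gamma> \<delta> \<in> p)"
  unfolding right_nbhd_ultrafilters_def mem_betaN_iff by auto

lemma beta_closed_right_nbhd_ultrafilters: "beta_closed (right_nbhd_ultrafilters \<gamma>)"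
  unfolding right_nbhd_ultrafilters_def by (rule beta_closed_basic)

lemma right_nbhd_ultrafilters_nonempty:
  assumes "\<gamma> \<notin> \<rat>"
  shows "right_nbhd_ultrafilters \<gamma> \<noteq> {}"
proof -
  have "\<forall>A\<in>right_nbhd \<gamma> ` {0<..}. \<forall>B\<in>right_nbhd \<gamma> ` {0<..}. \<exists>C\<in>right_nbhd \<gamma> ` {0<..}. C \<subseteq> A \<inter> B"
  proof (intro ballI)
    fix A B assume "A \<in> right_nbhd \<gamma> ` {0<..}" "B \<in> right_nbhd \<gamma> ` {0<..}"
    then obtain \<delta>1 \<delta>2 where "\<delta>1 > 0" "\<delta>2 > 0" "A = right_nbhd \<gamma> \<delta>1" "B = right_nbhd \<gamma> \<delta>2"
      by auto
    then show "\<exists>C\<in>right_nbhd \<gamma> ` {0<..}. C \<subseteq> A \<inter> B"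
      using right_nbhd_mono[of "min \<delta>1 \<delta>2"] by (intro bexI[of _ "right_nbhd \<gamma> (min \<delta>1 \<delta>2)"]) auto
  qed
  moreover have "right_nbhd \<gamma> 1 \<in> right_nbhd \<gamma> ` {0<..}" by simp
  then have "right_nbhd \<gamma> ` {0<..} \<noteq> {}" by blast
  moreover have "{} \<notin> right_nbhd \<gamma> ` {0<..}" using right_nbhd_nonempty[OF assms] by auto
  ultimately obtain s where "is_ultrafilter s" "right_nbhd \<gamma> ` {0<..} \<subseteq> s"
    using ultrafilter_extends_filter_base by metis
  then have "s \<in> right_nbhd_ultrafilters \<gamma>" unfolding right_nbhd_ultrafilters_def mem_betaN_iff by blast
  then show ?thesis by blast
qed

lemma uf_plus_mem_right_nbhd_ultrafilters:
  assumes "is_ultrafilter a" "\<forall>\<epsilon>>0. bohr_nbhd \<gamma> \<epsilon> \<in> a" "b \<in> right_nbhd_ultrafilters \<gamma>"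
  shows "uf_plus a b \<in> right_nbhd_ultrafilters \<gamma>"
proof -
  have "is_ultrafilter b" "\<forall>\<delta>>0. right_nbhd \<gamma> \<delta> \<in> b"
    using assms(3) unfolding mem_right_nbhd_ultrafilters_iff by blast+
  then show ?thesis
    unfolding mem_right_nbhd_ultrafilters_iff
    using uf_plus_mem_right_nbhd[OF assms(1,2)] is_ultrafilter_uf_plus[OF assms(1)] by blast
qed

lemma uf_subsemigroup_right_nbhd_ultrafilters: "uf_subsemigroup (right_nbhd_ultrafilters \<gamma>)"
  unfolding uf_subsemigroup_def
proof (intro ballI)
  fix a b assume a: "a \<in> right_nbhd_ultrafilters \<gamma>" and b: "b \<in> right_nbhd_ultrafilters \<gamma>"
  then have "\<forall>\<epsilon>>0. bohr_nbhd \<gamma> \<epsilon> \<in> a"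
    using right_nbhd_subset_bohr_nbhd is_ultrafilter_mono unfolding mem_right_nbhd_ultrafilters_iff by blast
  then show "uf_plus a b \<in> right_nbhd_ultrafilters \<gamma>"
    using a b uf_plus_mem_right_nbhd_ultrafilters unfolding mem_right_nbhd_ultrafilters_iff by blast
qed

text \<open>The only principal idempotent is the one at 0, and 0 lies in no right_nbhd.\<close>
lemma idempotent_nonprincipal_if_right_nbhd:
  assumes p: "is_ultrafilter p" "uf_plus p p = p" and "right_nbhd \<gamma> \<delta> \<in> p"
  shows "{n} \<notin> p"
proof
  assume "{n} \<in> p"
  then have "{0} \<in> p" using principal_idempotent_eq_0[OF p] by blast
  then have "{0} \<inter> right_nbhd \<gamma> \<delta> \<in> p" using is_ultrafilter_Int_iff[OF p(1)] assms(3) by blast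
  moreover have "{0} \<inter> right_nbhd \<gamma> \<delta> = {}" unfolding right_nbhd_def by auto
  ultimately show False using p(1) is_ultrafilter_empty by metis
qed

theorem minimal_idempotent_right_nbhd:
  assumes "\<gamma> \<notin> \<rat>"
  obtains p where "minimal_idempotent p" "\<forall>\<delta>>0. right_nbhd \<gamma> \<delta> \<in> p"
proof -
  define T where "T = right_nbhd_ultrafilters \<gamma>"
  obtain s where "s \<in> T" using right_nbhd_ultrafilters_nonempty[OF assms] unfolding T_def by blast
  obtain R where R: "R \<noteq> {}" "beta_closed R" "uf_right_ideal R" "R \<subseteq> smallest_ideal"
    by (rule minimal_right_ideal_subset_smallest_ideal)
  have "R \<subseteq> betaN" using R(2) unfolding beta_closed_def by blast
  then have R_semigroup: "uf_subsemigroup R" using R(3) by (rule uf_right_ideal_imp_subsemigroup)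
  obtain e where e: "e \<in> R" "uf_plus e e = e" using Ellis_Numakura[OF R(1,2) R_semigroup] by blast
  have "is_ultrafilter e" using e(1) R(2) beta_closed_imp_ultrafilter by blast
  \<comment> \<open>e + s lies in R (a right ideal) and in T, so R \<inter> T is a nonempty closed subsemigroup.\<close>
  have "s \<in> betaN" using \<open>s \<in> T\<close> unfolding T_def right_nbhd_ultrafilters_def by blast
  then have "uf_plus e s \<in> R" using R(3) e(1) unfolding uf_right_ideal_def by blast
  moreover have "uf_plus e s \<in> T"
    using uf_plus_mem_right_nbhd_ultrafilters[OF \<open>is_ultrafilter e\<close> _ \<open>s \<in> T\<close>[unfolded T_def]]
      bohr_nbhd_mem_idempotent[OF \<open>is_ultrafilter e\<close> e(2)]
    unfolding T_def by blast
  ultimately have "R \<inter> T \<noteq> {}" by blast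
  moreover have "beta_closed (R \<inter> T)"
    unfolding T_def by (intro beta_closed_Int R(2) beta_closed_right_nbhd_ultrafilters)
  moreover have "uf_subsemigroup (R \<inter> T)"
    using R_semigroup uf_subsemigroup_right_nbhd_ultrafilters[of \<gamma>, folded T_def]
    unfolding uf_subsemigroup_def by blast
  ultimately obtain p where p: "p \<in> R \<inter> T" "uf_plus p p = p"
    by (rule Ellis_Numakura)
  then have "p \<in> T" by blast
  then have p_uf: "is_ultrafilter p" "\<forall>\<delta>>0. right_nbhd \<gamma> \<delta> \<in> p"
    unfolding T_def mem_right_nbhd_ultrafilters_iff by blast+
  then have "\<forall>n. {n} \<notin> p"
    using idempotent_nonprincipal_if_right_nbhd[OF p_uf(1) p(2), of \<gamma> 1] by simp
  then have "minimal_idempotent p"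
    unfolding minimal_idempotent_def mem_betaN_iff using p R(4) p_uf(1) by blast
  then show thesis using that p_uf(2) by blast
qed

lemma central_if_right_nbhd_subset:
  assumes "\<gamma> \<notin> \<rat>" "\<delta> > 0" "right_nbhd \<gamma> \<delta> \<subseteq> A"
  shows "central A"
proof -
  obtain p where p: "minimal_idempotent p" "\<forall>\<delta>>0. right_nbhd \<gamma> \<delta> \<in> p"
    by (rule minimal_idempotent_right_nbhd[OF assms(1)])
  then have "is_ultrafilter p" unfolding minimal_idempotent_def mem_betaN_iff by blast
  moreover have "right_nbhd \<gamma> \<delta> \<in> p" using p(2) assms(2) by blast
  ultimately have "A \<in> p" using assms(3) is_ultrafilter_mono by blast
  then show ?thesis unfolding central_def using p(1) by blast
qed

theorem mainTheorem9:
  fixes k :: nat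
  assumes "k \<ge> 1"
  defines "u \<equiv> map fib_word [0..<k]"
  shows "IP_star_set (occ fib_word u) \<and> central_star (occ fib_word u)
    \<and> IP_set (occ fib_word_g (0 # u)) \<and> central (occ fib_word_g (0 # u))
    \<and> IP_set (occ fib_word_g (1 # u)) \<and> central (occ fib_word_g (1 # u))"
proof -
  have g: "fib_word_g = (\<lambda>n. if n = 0 then 0 else mech_word fib_slope (n - 1))"
    unfolding fib_word_g_def[abs_def] fib_word_eq_mech_word ..
  have u: "u = map (mech_word fib_slope) [0..<k]" unfolding u_def fib_word_eq_mech_word ..
  obtain \<delta> where \<delta>: "\<delta> > 0"
    "\<forall>n\<in>bohr_nbhd fib_slope \<delta>. \<forall>i<k. mech_word fib_slope (n + i) = mech_word fib_slope i"
    using mech_word_prefix_bohr_nbhd[OF fib_slope_irrational] by blast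
  then have "bohr_nbhd fib_slope \<delta> \<subseteq> occ fib_word u"
    unfolding u fib_word_eq_mech_word subset_iff occ_map_upt_iff by blast
  then have IP_star: "IP_star_set (occ fib_word u)"
    by (rule IP_star_set_mono[OF IP_star_set_bohr_nbhd[OF \<delta>(1)]])
  have "fib_slope < 1" using fib_slope_bounds(2) by simp
  then obtain \<delta>' where \<delta>': "\<delta>' > 0" "right_nbhd fib_slope \<delta>' \<subseteq> occ fib_word_g (0 # u)"
    "right_nbhd (- fib_slope) \<delta>' \<subseteq> occ fib_word_g (1 # u)"
    using shifted_mech_word_occ_right_nbhd[OF fib_slope_irrational fib_slope_bounds(1)]
    unfolding g u by blast
  have "central (occ fib_word_g (0 # u))"
    by (rule central_if_right_nbhd_subset[OF fib_slope_irrational \<delta>'(1,2)])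
  moreover have "central (occ fib_word_g (1 # u))"
    by (rule central_if_right_nbhd_subset[OF irrational_uminus[OF fib_slope_irrational] \<delta>'(1,3)])
  ultimately show ?thesis
    using IP_star IP_star_set_imp_central_star[OF IP_star] central_imp_IP_set by simp
qed

end
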